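(* Fix $u_{\max}>0$, $u^*\in[0,u_{\max}]$, $u_b\in[0,u_{\max}]$, $C\ge 0$, and consider the problem (P1): $\min_{s\in\mathcal C_a}\{s^2: p(s)\le -C\}$ where $p(s)=g(s,u_b)$. Let $\delta=\min\{u^*,\hat u\}$, $m=\frac{2u^*+u_{\max}}4$. (i) If $u^*\ne\hat u$: $p'<0$ on $[0,\delta)\cup(\gamma,u_{\max}]$ and $p'>0$ on $(\delta,\gamma)$, where $\gamma=\max\{u^*,\hat u\}$. Moreover: if $p(0)\le -C$, the optimal solution of (P1) is $s=0$; if $p(\delta)\le -C<p(0)$, the optimal solution is the smallest root of $p(s)=-C$ in $\mathcal C_a$ (which lies in $(0,\delta]$); if $-C<p(\delta)$, (P1) is infeasible. (ii) If $u^*=\hat u$: $p'<0$ on $[0,u_{\max}]\setminus\{\hat u\}$ and $p'(\hat u)=0$. Moreover: if $p(0)\le -C$, the optimal solution is $s=0$; if $p(m)\le -C<p(0)$, the optimal solution is the unique root of $p(s)=-C$ in $(0,m]$; if $-C<p(m)$, (P1) is infeasible.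
   Context: $f(u)=u(1-u/u_{\max})$ on $[0,u_{\max}]$, $\hat u=u_{\max}/2$ its unique maximizer, $F$ a primitive of $f$, $g(s,z)=(s-u^* )f(s)-(z-u^* )f(z)-F(s)+F(z)$, and $\mathcal C_a=[0,\frac{2u^*+u_{\max}}4]$. *)

theory Defs
  imports "HOL-Analysis.Analysis"
begin

definition flux :: "real \<Rightarrow> real \<Rightarrow> real" where
  "flux umax u = u * (1 - u / umax)"

definition uhat :: "real \<Rightarrow> real" where
  "uhat umax = umax / 2"

definition gfun :: "real \<Rightarrow> real \<Rightarrow> (real \<Rightarrow> real) \<Rightarrow> real \<Rightarrow> real \<Rightarrow> real" where
  "gfun umax ustar F s z =
     (s - ustar) * flux umax s - (z - ustar) * flux umax z - F s + F z"

definition Ca :: "real \<Rightarrow> real \<Rightarrow> real set" where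
  "Ca umax ustar = {0 .. (2 * ustar + umax) / 4}"

definition feasP1 :: "(real \<Rightarrow> real) \<Rightarrow> real set \<Rightarrow> real \<Rightarrow> real set" where
  "feasP1 p A C = {s \<in> A. p s \<le> - C}"

definition optP1 :: "(real \<Rightarrow> real) \<Rightarrow> real set \<Rightarrow> real \<Rightarrow> real set" where
  "optP1 p A C = {s. is_arg_min (\<lambda>x. x^2) (\<lambda>x. x \<in> feasP1 p A C) s}"

end

theory Submission
  imports Defs
begin

text \<open>
  Because \<open>F' = f\<close>, the slope of \<open>p(s) = g(s, u_b)\<close> is \<open>(s - u*) f'(s) = (2/u_max) (s - u*) (u_hat - s)\<close>
  with \<open>u_hat = u_max/2\<close>: a downward parabola with roots \<open>u*\<close> and \<open>u_hat\<close>. Hence \<open>p\<close> decreases up to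
  \<open>\<delta> = min u* u_hat\<close>, increases up to \<open>\<gamma> = max u* u_hat\<close> and decreases afterwards. The right end of
  \<open>C_a\<close> is the midpoint of \<open>u*\<close> and \<open>u_hat\<close>, so over \<open>C_a\<close> the function \<open>p\<close> is smallest at \<open>\<delta>\<close>.
  Since \<open>C_a \<subseteq> [0, \<infinity>)\<close>, minimizing \<open>s\<^sup>2\<close> means taking the least feasible point, which is \<open>0\<close>, the
  first crossing of the level \<open>-C\<close> on \<open>[0, \<delta>]\<close> (intermediate value theorem), or does not exist.
\<close>

lemma gfun_has_real_derivative:
  assumes "umax \<noteq> 0" and "\<And>x. (F has_real_derivative flux umax x) (at x)"
  shows "((\<lambda>s. gfun umax ustar F s z) has_real_derivative
           2 / umax * ((s - ustar) * (uhat umax - s))) (at s)"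
  unfolding gfun_def uhat_def
  using assms by (auto intro!: derivative_eq_intros simp: flux_def field_simps)

lemma mult_diff_neg_outside:
  fixes a b s :: real
  assumes "s < min a b \<or> max a b < s"
  shows "(s - a) * (b - s) < 0"
proof (cases "s < min a b")
  case True
  then have "s - a < 0" "0 < b - s" by auto
  then show ?thesis by (rule mult_neg_pos)
next
  case False
  with assms have "0 < s - a" "b - s < 0" by auto
  then show ?thesis by (rule mult_pos_neg)
qed

lemma mult_diff_pos_between:
  fixes a b s :: real
  assumes "min a b < s" "s < max a b"
  shows "0 < (s - a) * (b - s)"
proof (cases "a \<le> b")
  case True
  with assms have "0 < s - a" "0 < b - s" by auto
  then show ?thesis by simp
next
  case False
  with assms have "s - a < 0" "b - s < 0" by auto
  then show ?thesis by (rule mult_neg_neg)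
qed

lemma DERIV_neg_imp_decreasing_everywhere:
  fixes f f' :: "real \<Rightarrow> real"
  assumes "\<And>x. (f has_real_derivative f' x) (at x)" "a < b"
    and "\<And>x. a < x \<Longrightarrow> x < b \<Longrightarrow> f' x < 0"
  shows "f b < f a"
proof (rule DERIV_neg_imp_decreasing_open[OF \<open>a < b\<close>])
  show "continuous_on {a..b} f"
    using assms(1) by (meson DERIV_isCont continuous_at_imp_continuous_on)
qed (use assms in blast)

lemma DERIV_pos_imp_increasing_everywhere:
  fixes f f' :: "real \<Rightarrow> real"
  assumes "\<And>x. (f has_real_derivative f' x) (at x)" "a < b"
    and "\<And>x. a < x \<Longrightarrow> x < b \<Longrightarrow> 0 < f' x"
  shows "f a < f b"
proof (rule DERIV_pos_imp_increasing_open[OF \<open>a < b\<close>])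
  show "continuous_on {a..b} f"
    using assms(1) by (meson DERIV_isCont continuous_at_imp_continuous_on)
qed (use assms in blast)

lemma decreasing_first_crossing:
  fixes p :: "real \<Rightarrow> real"
  assumes "x0 \<le> x1" and cont: "continuous_on {x0..x1} p"
    and dec: "\<And>x y. x0 \<le> x \<Longrightarrow> x < y \<Longrightarrow> y \<le> x1 \<Longrightarrow> p y < p x"
    and "p x1 \<le> c" "c < p x0"
  obtains r where "r \<in> {x0<..x1}" "p r = c" "\<And>s. x0 \<le> s \<Longrightarrow> s < r \<Longrightarrow> c < p s"
proof -
  obtain r where r: "x0 \<le> r" "r \<le> x1" "p r = c"
    using IVT2'[of p x1 c x0] assms(1,4,5) cont by auto
  with \<open>c < p x0\<close> have "r \<noteq> x0" by auto
  with r dec that show thesis by force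
qed

lemma optP1_eq_singleton:
  assumes "r \<ge> 0" "r \<in> feasP1 p A C" "\<And>s. s \<in> feasP1 p A C \<Longrightarrow> r \<le> s"
  shows "optP1 p A C = {r}"
proof -
  have "is_arg_min (\<lambda>x. x^2) (\<lambda>x. x \<in> feasP1 p A C) s \<longleftrightarrow> s = r" for s :: real
  proof
    assume "is_arg_min (\<lambda>x. x^2) (\<lambda>x. x \<in> feasP1 p A C) s"
    then have "s \<in> feasP1 p A C" "\<not> r^2 < s^2"
      using assms(2) unfolding is_arg_min_def by auto
    with assms show "s = r"
      by (meson antisym not_less order_trans power_strict_mono zero_less_numeral)
  next
    assume "s = r"
    with assms show "is_arg_min (\<lambda>x. x^2) (\<lambda>x. x \<in> feasP1 p A C) s"
      unfolding is_arg_min_def by (smt (verit) power_mono)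
  qed
  then show ?thesis unfolding optP1_def by auto
qed

locale parabolic_slope =
  fixes p :: "real \<Rightarrow> real" and k a b :: real
  assumes k_pos: "0 < k"
    and has_slope: "\<And>x. (p has_real_derivative k * ((x - a) * (b - x))) (at x)"
begin

lemma deriv_eq: "deriv p x = k * ((x - a) * (b - x))"
  using has_slope by (rule DERIV_imp_deriv)

lemma continuous_on: "continuous_on S p"
  using has_slope by (meson DERIV_isCont continuous_at_imp_continuous_on)

lemma slope_neg_outside: "s < min a b \<or> max a b < s \<Longrightarrow> deriv p s < 0"
  by (simp add: deriv_eq k_pos mult_pos_neg mult_diff_neg_outside)

lemma slope_pos_between: "min a b < s \<Longrightarrow> s < max a b \<Longrightarrow> 0 < deriv p s"
  by (simp add: deriv_eq k_pos mult_diff_pos_between)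

lemma decreasing_below: "x < y \<Longrightarrow> y \<le> min a b \<Longrightarrow> p y < p x"
  by (rule DERIV_neg_imp_decreasing_everywhere[OF has_slope])
    (auto simp: k_pos mult_pos_neg mult_diff_neg_outside)

lemma decreasing_above: "max a b \<le> x \<Longrightarrow> x < y \<Longrightarrow> p y < p x"
  by (rule DERIV_neg_imp_decreasing_everywhere[OF has_slope])
    (auto simp: k_pos mult_pos_neg mult_diff_neg_outside)

lemma increasing_between: "min a b \<le> x \<Longrightarrow> x < y \<Longrightarrow> y \<le> max a b \<Longrightarrow> p x < p y"
  by (rule DERIV_pos_imp_increasing_everywhere[OF has_slope])
    (auto simp: k_pos mult_diff_pos_between)

lemma min_le_below_midpoint:
  assumes "s \<le> (a + b) / 2"
  shows "p (min a b) \<le> p s"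
proof (cases "s \<le> min a b")
  case True
  show ?thesis
  proof (cases "s = min a b")
    case False
    with True have "s < min a b" by (rule le_neq_trans)
    then show ?thesis using decreasing_below[of s "min a b"] by simp
  qed simp
next
  case False
  with assms have "min a b < s" "s \<le> max a b" by auto
  then show ?thesis using increasing_between[of "min a b" s] by auto
qed

lemma decreasing_if_double_root:
  assumes "a = b" "x < y"
  shows "p y < p x"
proof -
  consider "y \<le> a" | "a \<le> x" | "x < a" "a < y" by linarith
  then show ?thesis
  proof cases
    case 3
    then have "p a < p x" "p y < p a"
      using decreasing_below[of x a] decreasing_above[of a y] \<open>a = b\<close> by auto
    then show ?thesis by linarith
  qed (use assms decreasing_below decreasing_above in auto)
qed

context
  assumes roots_nonneg: "0 \<le> a" "0 \<le> b"
begin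

lemma optP1_zero: "p 0 \<le> - C \<Longrightarrow> optP1 p {0 .. (a + b) / 2} C = {0}"
  by (rule optP1_eq_singleton) (use roots_nonneg in \<open>auto simp: feasP1_def\<close>)

lemma infeasible: "- C < p (min a b) \<Longrightarrow> feasP1 p {0 .. (a + b) / 2} C = {}"
  unfolding feasP1_def using min_le_below_midpoint by fastforce

lemma optP1_first_crossing:
  assumes "p (min a b) \<le> - C" "- C < p 0"
  shows "\<exists>r \<in> {0<..min a b}. p r = - C \<and>
           (\<forall>s \<in> {0 .. (a + b) / 2}. p s \<le> - C \<longrightarrow> r \<le> s) \<and>
           optP1 p {0 .. (a + b) / 2} C = {r}"
proof -
  obtain r where r: "r \<in> {0<..min a b}" "p r = - C"
    and above: "\<And>s. 0 \<le> s \<Longrightarrow> s < r \<Longrightarrow> - C < p s"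
  proof (rule decreasing_first_crossing[OF _ continuous_on _ assms])
    show "p y < p x" if "0 \<le> x" "x < y" "y \<le> min a b" for x y
      using decreasing_below that(2,3) .
  qed (use roots_nonneg in auto)
  have least: "r \<le> s" if "s \<in> {0 .. (a + b) / 2}" "p s \<le> - C" for s
    using above[of s] that by force
  have "optP1 p {0 .. (a + b) / 2} C = {r}"
    by (rule optP1_eq_singleton) (use r least in \<open>auto simp: feasP1_def\<close>)
  with r least show ?thesis by blast
qed

end

end

theorem mainTheorem4:
  fixes umax ustar ub C :: real and F :: "real \<Rightarrow> real"
  assumes umax_pos: "umax > 0"
    and ustar: "ustar \<in> {0..umax}"
    and ub: "ub \<in> {0..umax}"
    and C: "C \<ge> 0"
    and F_prim: "\<forall>x. (F has_real_derivative flux umax x) (at x)"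
  defines "p \<equiv> (\<lambda>s. gfun umax ustar F s ub)"
    and "\<delta> \<equiv> min ustar (uhat umax)"
    and "\<gamma> \<equiv> max ustar (uhat umax)"
    and "m \<equiv> (2 * ustar + umax) / 4"
  shows
   "(ustar \<noteq> uhat umax \<longrightarrow>
      (\<forall>s \<in> {0..<\<delta>} \<union> {\<gamma><..umax}. deriv p s < 0) \<and>
      (\<forall>s \<in> {\<delta><..<\<gamma>}. deriv p s > 0) \<and>
      (p 0 \<le> - C \<longrightarrow> optP1 p (Ca umax ustar) C = {0}) \<and>
      (p \<delta> \<le> - C \<and> - C < p 0 \<longrightarrow>
         (\<exists>r. r \<in> {0<..\<delta>} \<and> r \<in> Ca umax ustar \<and> p r = - C \<and>
              (\<forall>s \<in> Ca umax ustar. p s = - C \<longrightarrow> r \<le> s) \<and>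
              optP1 p (Ca umax ustar) C = {r})) \<and>
      (- C < p \<delta> \<longrightarrow> feasP1 p (Ca umax ustar) C = {}))
    \<and>
    (ustar = uhat umax \<longrightarrow>
      (\<forall>s \<in> {0..umax} - {uhat umax}. deriv p s < 0) \<and>
      deriv p (uhat umax) = 0 \<and>
      (p 0 \<le> - C \<longrightarrow> optP1 p (Ca umax ustar) C = {0}) \<and>
      (p m \<le> - C \<and> - C < p 0 \<longrightarrow>
         (\<exists>r. r \<in> {0<..m} \<and> p r = - C \<and>
              (\<forall>s \<in> {0<..m}. p s = - C \<longrightarrow> s = r) \<and>
              optP1 p (Ca umax ustar) C = {r})) \<and>
      (- C < p m \<longrightarrow> feasP1 p (Ca umax ustar) C = {}))"
proof -
  interpret parabolic_slope p "2 / umax" ustar "uhat umax"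
    using umax_pos F_prim gfun_has_real_derivative unfolding p_def by unfold_locales auto
  have roots: "0 \<le> ustar" "0 \<le> uhat umax" using ustar umax_pos by (auto simp: uhat_def)
  have m: "m = (ustar + uhat umax) / 2" by (simp add: m_def uhat_def field_simps)
  have Ca: "Ca umax ustar = {0 .. m}" by (simp add: Ca_def m_def)
  note P1 = optP1_zero[OF roots] infeasible[OF roots] optP1_first_crossing[OF roots]
  show ?thesis
  proof (intro conjI impI)
    show "\<forall>s \<in> {0..<\<delta>} \<union> {\<gamma><..umax}. deriv p s < 0"
      using slope_neg_outside by (auto simp: \<delta>_def \<gamma>_def)
    show "\<forall>s \<in> {\<delta><..<\<gamma>}. deriv p s > 0"
      using slope_pos_between by (auto simp: \<delta>_def \<gamma>_def)
    show "optP1 p (Ca umax ustar) C = {0}" if "p 0 \<le> - C"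
      using P1(1) that Ca m by simp
    show "feasP1 p (Ca umax ustar) C = {}" if "- C < p \<delta>"
      using P1(2) that Ca m \<delta>_def by simp
    show "\<exists>r. r \<in> {0<..\<delta>} \<and> r \<in> Ca umax ustar \<and> p r = - C \<and>
              (\<forall>s \<in> Ca umax ustar. p s = - C \<longrightarrow> r \<le> s) \<and>
              optP1 p (Ca umax ustar) C = {r}" if "p \<delta> \<le> - C \<and> - C < p 0"
      using P1(3) that unfolding Ca m \<delta>_def by fastforce
  next
    assume double: "ustar = uhat umax"
    show "\<forall>s \<in> {0..umax} - {uhat umax}. deriv p s < 0"
      using slope_neg_outside double by (auto simp: neq_iff)
    show "deriv p (uhat umax) = 0"
      using double by (simp add: deriv_eq)
    show "optP1 p (Ca umax ustar) C = {0}" if "p 0 \<le> - C"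
      using P1(1) that Ca m by simp
    show "feasP1 p (Ca umax ustar) C = {}" if "- C < p m"
      using P1(2) that Ca m double by simp
    show "\<exists>r. r \<in> {0<..m} \<and> p r = - C \<and>
              (\<forall>s \<in> {0<..m}. p s = - C \<longrightarrow> s = r) \<and>
              optP1 p (Ca umax ustar) C = {r}" if level: "p m \<le> - C \<and> - C < p 0"
    proof -
      obtain r where "r \<in> {0<..m}" "p r = - C" "optP1 p {0..m} C = {r}"
        using P1(3)[where C = C] level unfolding m double by auto
      moreover have "s = r" if "p s = - C" "p r = - C" for s
        using decreasing_if_double_root[OF double] that by (metis less_irrefl neq_iff)
      ultimately show ?thesis unfolding Ca by blast
    qed
  qed
qed

end
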